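(* Let $I$ be a finite set of positive integers and $m=\max(I\cup\{0\})$. Then for every integer $n\ge m+2$, $$d(I;n)\ge |d(I;-1)|.$$
   Context: For $n>m$, $d(I;n)$ is the number of permutations $\pi\in\mathfrak S_n$ with $\{i\mid\pi_i>\pi_{i+1}\}=I$; it is a polynomial in $n$, and $d(I;-1)$ is the value of this polynomial at $-1$. *)

theory Defs
  imports "HOL-Combinatorics.Permutations" "HOL-Computational_Algebra.Polynomial"
begin

definition descents :: "nat \<Rightarrow> (nat \<Rightarrow> nat) \<Rightarrow> nat set" where
  "descents n p = {i. 1 \<le> i \<and> i < n \<and> p i > p (Suc i)}"

definition dcount :: "nat set \<Rightarrow> nat \<Rightarrow> nat" where
  "dcount I n = card {p. p permutes {1..n} \<and> descents n p = I}"

definition dpoly :: "nat set \<Rightarrow> real poly" where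
  "dpoly I = (THE q. \<forall>n. n > Max (I \<union> {0}) \<longrightarrow> poly q (real n) = real (dcount I n))"

end

theory Submission
  imports Defs
begin

text \<open>
  Let \<open>m = max I\<close> and \<open>J = I - {m}\<close>. A permutation of \<open>[n]\<close> whose descents below \<open>m\<close>
  form \<open>J\<close> and which increases after position \<open>m\<close> is determined by the set of its first
  \<open>m\<close> values and the standardization of its first \<open>m\<close> letters; its descent set is \<open>J\<close> or
  \<open>I\<close>. Hence \<open>d(I;n) + d(J;n) = C(n,m) d(J;m)\<close> for \<open>n \<ge> m\<close>, so the polynomial of \<open>I\<close> is
  \<open>d(J;m) C(x,m)\<close> minus that of \<open>J\<close>, and as \<open>C(-1,m) = \<plusminus>1\<close>,
  \<open>|d(I;-1)| \<le> d(J;m) + |d(J;-1)| \<le> d(J;m) + d(J;m+1)\<close> by induction. The last sum counts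
  two disjoint families of permutations of \<open>[m+2]\<close> with descent set \<open>I\<close>: raise a
  permutation of \<open>[m]\<close> by two and append \<open>1 2\<close>, or raise a permutation of \<open>[m+1]\<close> by one
  and insert \<open>1\<close> before its last letter. Finally \<open>d(I;n)\<close> increases with \<open>n\<close>.
\<close>

definition binomial_poly :: "nat \<Rightarrow> 'a::field_char_0 poly" where
  "binomial_poly k = smult (1 / fact k) (\<Prod>i<k. [:- of_nat i, 1:])"

lemma poly_binomial_poly: "poly (binomial_poly k) x = x gchoose k"
  by (simp add: binomial_poly_def poly_prod gbinomial_prod_rev atLeast0LessThan)

lemma poly_binomial_poly_of_nat: "poly (binomial_poly k) (of_nat n) = of_nat (n choose k)"
  by (simp add: poly_binomial_poly binomial_gbinomial)

lemma poly_binomial_poly_minus_one: "poly (binomial_poly k) (-1) = (-1) ^ k"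
  by (simp add: poly_binomial_poly gbinomial_minus[of 1] binomial_gbinomial[of k k, symmetric])

lemma poly_eqI_of_nat_greater:
  fixes p q :: "'a::{idom, ring_char_0} poly"
  assumes "\<And>n. n > M \<Longrightarrow> poly p (of_nat n) = poly q (of_nat n)"
  shows "p = q"
proof (rule ccontr)
  assume "p \<noteq> q"
  then have "finite {x. poly (p - q) x = 0}"
    by (intro poly_roots_finite) simp
  moreover have "of_nat ` {M<..} \<subseteq> {x. poly (p - q) x = 0}"
    using assms by auto
  moreover have "infinite (of_nat ` {M<..} :: 'a set)"
    using finite_imageD[of of_nat "{M<..}"] inj_of_nat infinite_Ioi[of M]
    by (metis inj_on_subset subset_UNIV)
  ultimately show False
    using finite_subset by blast
qed

lemma dpoly_eqI:
  assumes "\<And>n. n > Max (I \<union> {0}) \<Longrightarrow> poly q (real n) = real (dcount I n)"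
  shows "dpoly I = q"
  unfolding dpoly_def
proof (rule the_equality)
  show "\<forall>n. n > Max (I \<union> {0}) \<longrightarrow> poly q (real n) = real (dcount I n)"
    using assms by blast
  fix q' assume "\<forall>n. n > Max (I \<union> {0}) \<longrightarrow> poly q' (real n) = real (dcount I n)"
  with assms show "q' = q"
    by (intro poly_eqI_of_nat_greater[of "Max (I \<union> {0})"]) simp
qed

definition set_rank :: "'a::linorder set \<Rightarrow> 'a \<Rightarrow> nat" where
  "set_rank A x = card {y\<in>A. y < x}"

lemma set_rank_strict_mono:
  "finite A \<Longrightarrow> y \<in> A \<Longrightarrow> y < x \<Longrightarrow> set_rank A y < set_rank A x"
  unfolding set_rank_def by (rule psubset_card_mono) auto

lemma set_rank_less_iff:
  "finite A \<Longrightarrow> x \<in> A \<Longrightarrow> y \<in> A \<Longrightarrow> set_rank A x < set_rank A y \<longleftrightarrow> x < y"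
  by (metis linorder_neqE order_less_asym set_rank_strict_mono)

lemma inj_on_set_rank: "finite A \<Longrightarrow> inj_on (set_rank A) A"
  by (metis inj_onI linorder_neqE order_less_irrefl set_rank_strict_mono)

lemma bij_betw_set_rank: "finite A \<Longrightarrow> bij_betw (set_rank A) A {..<card A}"
proof -
  assume fin: "finite A"
  have "set_rank A ` A \<subseteq> {..<card A}"
    unfolding set_rank_def using fin by (auto intro: psubset_card_mono)
  moreover have "card (set_rank A ` A) = card {..<card A}"
    using card_image[OF inj_on_set_rank[OF fin]] by simp
  ultimately show ?thesis
    using inj_on_set_rank[OF fin] by (simp add: bij_betw_def card_subset_eq)
qed

definition set_enum :: "'a::linorder set \<Rightarrow> nat \<Rightarrow> 'a" where
  "set_enum A = inv_into A (set_rank A)"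

lemma bij_betw_set_enum: "finite A \<Longrightarrow> bij_betw (set_enum A) {..<card A} A"
  unfolding set_enum_def by (rule bij_betw_inv_into[OF bij_betw_set_rank])

lemma set_rank_set_enum: "finite A \<Longrightarrow> k < card A \<Longrightarrow> set_rank A (set_enum A k) = k"
  unfolding set_enum_def using bij_betw_inv_into_right[OF bij_betw_set_rank] by auto

lemma set_enum_less_iff:
  assumes "finite A" "k < card A" "l < card A"
  shows "set_enum A k < set_enum A l \<longleftrightarrow> k < l"
  using assms bij_betwE[OF bij_betw_set_enum] set_rank_less_iff set_rank_set_enum
  by (metis lessThan_iff)

lemma set_rank_strict_mono_on:
  assumes "strict_mono_on {a..<b} f" and "i \<in> {a..<b}"
  shows "set_rank (f ` {a..<b}) (f i) = i - a"
proof -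
  have "{y \<in> f ` {a..<b}. y < f i} = f ` {a..<i}"
  proof
    show "f ` {a..<i} \<subseteq> {y \<in> f ` {a..<b}. y < f i}"
      using assms by (auto intro: strict_mono_onD)
    show "{y \<in> f ` {a..<b}. y < f i} \<subseteq> f ` {a..<i}"
    proof
      fix y assume "y \<in> {y \<in> f ` {a..<b}. y < f i}"
      then obtain j where j: "j \<in> {a..<b}" "y = f j" "f j < f i"
        by blast
      then have "j < i"
        using strict_mono_on_less[OF assms(1) j(1) assms(2)] by simp
      then show "y \<in> f ` {a..<i}"
        using j by auto
    qed
  qed
  moreover have "inj_on f {a..<i}"
    by (rule inj_on_subset[OF strict_mono_on_imp_inj_on[OF assms(1)]]) (use assms(2) in auto)
  ultimately show ?thesis
    unfolding set_rank_def by (simp add: card_image)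
qed

lemma descents_Int_lessThan: "m \<le> n \<Longrightarrow> descents n p \<inter> {..<m} = descents m p"
  by (auto simp: descents_def)

lemma descents_Suc_eq:
  assumes "p permutes {1..n}"
  shows "descents (Suc n) p = descents n p"
proof -
  have "p (Suc n) = Suc n"
    using permutes_not_in[OF assms] by simp
  moreover have "n \<ge> 1 \<Longrightarrow> p n \<le> n"
    using permutes_in_image[OF assms, of n] by auto
  ultimately show ?thesis
    by (auto simp: descents_def less_Suc_eq)
qed

lemma dcount_mono:
  assumes "n \<le> n'"
  shows "dcount I n \<le> dcount I n'"
  using assms
proof (induction n' rule: dec_induct)
  case (step k)
  have "{p. p permutes {1..k} \<and> descents k p = I}
      \<subseteq> {p. p permutes {1..Suc k} \<and> descents (Suc k) p = I}"
    using descents_Suc_eq permutes_subset[of _ "{1..k}" "{1..Suc k}"] by auto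
  then have "dcount I k \<le> dcount I (Suc k)"
    unfolding dcount_def
    by (intro card_mono) (auto intro: finite_subset[OF _ finite_permutations[of "{1..Suc k}"]])
  with step.IH show ?case
    by linarith
qed simp

definition standardize :: "nat \<Rightarrow> (nat \<Rightarrow> nat) \<Rightarrow> nat \<Rightarrow> nat" where
  "standardize m p i = (if i \<in> {1..m} then Suc (set_rank (p ` {1..m}) (p i)) else i)"

lemma standardize_permutes:
  assumes inj: "inj_on p {1..m}"
  shows "standardize m p permutes {1..m}"
proof -
  let ?A = "p ` {1..m}"
  have "bij_betw (set_rank ?A \<circ> p) {1..m} {..<m}"
    using bij_betw_trans[OF inj_on_imp_bij_betw[OF inj] bij_betw_set_rank] card_image[OF inj]
    by simp
  then have "bij_betw (Suc \<circ> (set_rank ?A \<circ> p)) {1..m} {1..m}"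
    by (rule bij_betw_trans) (simp add: bij_betw_def image_Suc_lessThan)
  then have "bij_betw (standardize m p) {1..m} {1..m}"
    by (rule bij_betw_cong[THEN iffD1, rotated]) (simp add: standardize_def)
  then show ?thesis
    by (rule bij_imp_permutes) (auto simp: standardize_def)
qed

lemma descents_standardize:
  assumes "inj_on p {1..m}"
  shows "descents m (standardize m p) = descents m p"
proof -
  have "standardize m p i > standardize m p (Suc i) \<longleftrightarrow> p i > p (Suc i)"
    if "1 \<le> i" "i < m" for i
    using that set_rank_less_iff[of "p ` {1..m}" "p (Suc i)" "p i"]
    by (simp add: standardize_def)
  then show ?thesis
    by (auto simp: descents_def)
qed

lemma strict_mono_on_atLeastLessThanI_Suc:
  fixes f :: "nat \<Rightarrow> 'a::order"
  assumes "\<And>i. a \<le> i \<Longrightarrow> Suc i < b \<Longrightarrow> f i < f (Suc i)"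
  shows "strict_mono_on {a..<b} f"
proof (rule strict_mono_onI)
  fix i j assume "i \<in> {a..<b}" "j \<in> {a..<b}" "i < j"
  then show "f i < f j"
  proof (induction j)
    case (Suc j)
    show ?case
    proof (cases "i = j")
      case True
      then show ?thesis
        using Suc.prems assms by simp
    next
      case False
      then have "f i < f j"
        using Suc by simp
      also have "f j < f (Suc j)"
        using Suc.prems assms by simp
      finally show ?thesis .
    qed
  qed simp
qed

lemma strict_mono_on_tail:
  assumes p: "p permutes {1..n}" and "descents n p \<subseteq> {..m}"
  shows "strict_mono_on {Suc m..<Suc n} p"
proof (rule strict_mono_on_atLeastLessThanI_Suc)
  fix i assume i: "Suc m \<le> i" "Suc i < Suc n"
  then have "i \<notin> descents n p"
    using assms(2) by auto
  then have "\<not> p i > p (Suc i)"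
    using i by (simp add: descents_def)
  moreover have "p i \<noteq> p (Suc i)"
    using injD[OF permutes_inj[OF p], of i "Suc i"] by auto
  ultimately show "p i < p (Suc i)"
    by simp
qed

lemma permutes_image_tail:
  assumes p: "p permutes {1..n}" and "m \<le> n"
  shows "p ` {Suc m..<Suc n} = {1..n} - p ` {1..m}"
proof -
  have "p ` {Suc m..<Suc n} = p ` ({1..n} - {1..m})"
    by (rule arg_cong[where f = "image p"]) auto
  also have "\<dots> = p ` {1..n} - p ` {1..m}"
    by (rule inj_on_image_set_diff[OF permutes_inj_on[OF p]]) (use assms(2) in auto)
  also have "\<dots> = {1..n} - p ` {1..m}"
    using permutes_image[OF p] by simp
  finally show ?thesis .
qed

section \<open>Splitting a permutation after position m\<close>

definition prefix_descent_perms :: "nat \<Rightarrow> nat \<Rightarrow> nat set \<Rightarrow> (nat \<Rightarrow> nat) set" where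
  "prefix_descent_perms n m J =
     {p. p permutes {1..n} \<and> descents m p = J \<and> descents n p \<subseteq> {..m}}"

definition prefix_split :: "nat \<Rightarrow> (nat \<Rightarrow> nat) \<Rightarrow> nat set \<times> (nat \<Rightarrow> nat)" where
  "prefix_split m p = (p ` {1..m}, standardize m p)"

text \<open>
  The inverse of \<open>prefix_split\<close>: the first \<open>card A\<close> letters are the elements of \<open>A\<close> in the
  relative order given by \<open>s\<close>, followed by the rest of \<open>[n]\<close> in increasing order.
\<close>

definition prefix_merge :: "nat \<Rightarrow> nat set \<Rightarrow> (nat \<Rightarrow> nat) \<Rightarrow> nat \<Rightarrow> nat" where
  "prefix_merge n A s i =
     (if i \<in> {1..card A} then set_enum A (s i - 1)
      else if i \<in> {Suc (card A)..n} then set_enum ({1..n} - A) (i - Suc (card A))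
      else i)"

context
  fixes n m :: nat and A :: "nat set" and s :: "nat \<Rightarrow> nat"
  assumes A: "A \<subseteq> {1..n}" and card_A: "card A = m" and s: "s permutes {1..m}"
begin

private lemma finite_A: "finite A"
  using A finite_subset by blast

private lemma card_complement: "card ({1..n} - A) = n - m"
  using A card_A finite_A by (simp add: card_Diff_subset)

private lemma s_in: "i \<in> {1..m} \<Longrightarrow> s i \<in> {1..m}"
  using permutes_in_image[OF s] by blast

lemma bij_betw_prefix_merge_head: "bij_betw (prefix_merge n A s) {1..m} A"
proof -
  have "bij_betw (\<lambda>i. i - 1) {1..m} {..<m}"
    by (rule bij_betw_byWitness[where f' = Suc]) auto
  then have "bij_betw (set_enum A \<circ> ((\<lambda>i. i - 1) \<circ> s)) {1..m} A"
    using bij_betw_set_enum[OF finite_A] card_A permutes_imp_bij[OF s]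
    by (auto intro: bij_betw_trans)
  then show ?thesis
    by (rule bij_betw_cong[THEN iffD1, rotated]) (simp add: prefix_merge_def card_A)
qed

lemma bij_betw_prefix_merge_tail: "bij_betw (prefix_merge n A s) {Suc m..n} ({1..n} - A)"
proof -
  have "bij_betw (\<lambda>i. i - Suc m) {Suc m..n} {..<n - m}"
    by (rule bij_betw_byWitness[where f' = "\<lambda>k. k + Suc m"]) auto
  then have "bij_betw (set_enum ({1..n} - A) \<circ> (\<lambda>i. i - Suc m)) {Suc m..n} ({1..n} - A)"
    using bij_betw_set_enum[of "{1..n} - A"] card_complement by (auto intro: bij_betw_trans)
  then show ?thesis
    by (rule bij_betw_cong[THEN iffD1, rotated]) (simp add: prefix_merge_def card_A)
qed

lemma prefix_merge_permutes: "prefix_merge n A s permutes {1..n}"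
proof -
  have "bij_betw (prefix_merge n A s) ({1..m} \<union> {Suc m..n}) (A \<union> ({1..n} - A))"
    using bij_betw_prefix_merge_head bij_betw_prefix_merge_tail by (rule bij_betw_combine) blast
  moreover have "m \<le> n"
    using card_mono[OF _ A] card_A by simp
  then have "{1..m} \<union> {Suc m..n} = {1..n}"
    by auto
  moreover have "A \<union> ({1..n} - A) = {1..n}"
    using A by auto
  ultimately show ?thesis
    by (intro bij_imp_permutes) (auto simp: prefix_merge_def card_A)
qed

lemma descents_prefix_merge: "descents m (prefix_merge n A s) = descents m s"
proof -
  have "prefix_merge n A s (Suc i) < prefix_merge n A s i \<longleftrightarrow> s (Suc i) < s i"
    if i: "1 \<le> i" "i < m" for i
  proof -
    have "s i \<in> {1..m}" "s (Suc i) \<in> {1..m}"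
      using s_in i by auto
    then have "s (Suc i) - 1 < card A" "s i - 1 < card A"
      and "s (Suc i) - 1 < s i - 1 \<longleftrightarrow> s (Suc i) < s i"
      using card_A by auto
    then show ?thesis
      using i set_enum_less_iff[OF finite_A] by (simp add: prefix_merge_def card_A)
  qed
  then show ?thesis
    by (auto simp: descents_def)
qed

lemma descents_prefix_merge_subset: "descents n (prefix_merge n A s) \<subseteq> {..m}"
proof
  fix i assume i: "i \<in> descents n (prefix_merge n A s)"
  show "i \<in> {..m}"
  proof (rule ccontr)
    assume "i \<notin> {..m}"
    then have "m < i" "i < n"
      using i by (auto simp: descents_def)
    then have "i - Suc m < card ({1..n} - A)" "Suc i - Suc m < card ({1..n} - A)"
      using card_complement by auto
    then have "prefix_merge n A s i < prefix_merge n A s (Suc i)"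
      using \<open>m < i\<close> \<open>i < n\<close> set_enum_less_iff[of "{1..n} - A"]
      by (simp add: prefix_merge_def card_A)
    then show False
      using i by (simp add: descents_def)
  qed
qed

lemma prefix_split_prefix_merge: "prefix_split m (prefix_merge n A s) = (A, s)"
proof -
  have image: "prefix_merge n A s ` {1..m} = A"
    using bij_betw_prefix_merge_head by (simp add: bij_betw_def)
  have "standardize m (prefix_merge n A s) i = s i" for i
  proof (cases "i \<in> {1..m}")
    case True
    have "s i - 1 < card A" "s i \<ge> 1"
      using s_in[OF True] card_A by auto
    moreover have "prefix_merge n A s i = set_enum A (s i - 1)"
      using True by (simp add: prefix_merge_def card_A)
    moreover have "standardize m (prefix_merge n A s) i = Suc (set_rank A (prefix_merge n A s i))"
      using True unfolding standardize_def image by simp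
    ultimately show ?thesis
      using set_rank_set_enum[OF finite_A] by simp
  qed (auto simp: standardize_def permutes_not_in[OF s])
  then show ?thesis
    unfolding prefix_split_def image by (simp add: fun_eq_iff)
qed

end

context
  fixes n m :: nat and J :: "nat set"
  assumes m_le_n: "m \<le> n"
begin

lemma prefix_split_mem:
  assumes "p \<in> prefix_descent_perms n m J"
  shows "prefix_split m p
    \<in> {A. A \<subseteq> {1..n} \<and> card A = m} \<times> {s. s permutes {1..m} \<and> descents m s = J}"
proof -
  have p: "p permutes {1..n}" and J: "descents m p = J"
    using assms by (auto simp: prefix_descent_perms_def)
  have inj: "inj_on p {1..m}"
    using permutes_inj_on[OF p] m_le_n by (auto intro: inj_on_subset)
  have "p ` {1..m} \<subseteq> {1..n}"
    using permutes_image[OF p] m_le_n by auto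
  then show ?thesis
    using card_image[OF inj] standardize_permutes[OF inj] descents_standardize[OF inj] J
    by (simp add: prefix_split_def)
qed

lemma set_rank_complement_tail:
  assumes "p permutes {1..n}" "descents n p \<subseteq> {..m}" and "i \<in> {Suc m..<Suc n}"
  shows "set_rank ({1..n} - p ` {1..m}) (p i) = i - Suc m"
  using set_rank_strict_mono_on[OF strict_mono_on_tail[OF assms(1,2)] assms(3)]
    permutes_image_tail[OF assms(1) m_le_n]
  by simp

lemma inj_on_prefix_split: "inj_on (prefix_split m) (prefix_descent_perms n m J)"
proof (rule inj_onI)
  fix p q
  assume "p \<in> prefix_descent_perms n m J" "q \<in> prefix_descent_perms n m J"
    and split_eq: "prefix_split m p = prefix_split m q"
  then have p: "p permutes {1..n}" "descents n p \<subseteq> {..m}"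
    and q: "q permutes {1..n}" "descents n q \<subseteq> {..m}"
    by (auto simp: prefix_descent_perms_def)
  define A where "A = p ` {1..m}"
  define B where "B = {1..n} - A"
  have qA: "q ` {1..m} = A"
    using split_eq by (simp add: prefix_split_def A_def)
  have head: "p i = q i" if i: "i \<in> {1..m}" for i
  proof -
    have "Suc (set_rank A (p i)) = Suc (set_rank A (q i))"
      using fun_cong[OF arg_cong[where f = snd, OF split_eq], of i] i qA
      by (simp add: prefix_split_def standardize_def A_def)
    moreover have "p i \<in> A" "q i \<in> A"
      using i qA by (auto simp: A_def)
    ultimately show ?thesis
      using inj_on_set_rank[of A] by (auto simp: A_def dest: inj_onD)
  qed
  have tail: "p i = q i" if i: "i \<in> {Suc m..<Suc n}" for i
  proof -
    have "set_rank B (p i) = set_rank B (q i)"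
      using set_rank_complement_tail[OF p i] set_rank_complement_tail[OF q i] qA
      by (simp add: A_def B_def)
    moreover have "p ` {Suc m..<Suc n} = B" "q ` {Suc m..<Suc n} = B"
      using permutes_image_tail[OF p(1) m_le_n] permutes_image_tail[OF q(1) m_le_n] qA
      by (simp_all add: A_def B_def)
    then have "p i \<in> B" "q i \<in> B"
      using i by blast+
    ultimately show ?thesis
      using inj_on_set_rank[of B] by (auto simp: B_def dest: inj_onD)
  qed
  show "p = q"
  proof
    fix i
    consider "i \<in> {1..m}" | "i \<in> {Suc m..<Suc n}" | "i \<notin> {1..n}"
      using m_le_n by force
    then show "p i = q i"
      by cases (use head tail permutes_not_in[OF p(1)] permutes_not_in[OF q(1)] in auto)
  qed
qed

lemma prefix_split_surj:
  assumes "A \<subseteq> {1..n}" "card A = m" "s permutes {1..m}" "descents m s = J"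
  shows "(A, s) \<in> prefix_split m ` prefix_descent_perms n m J"
proof
  show "(A, s) = prefix_split m (prefix_merge n A s)"
    using prefix_split_prefix_merge[OF assms(1-3)] by simp
  show "prefix_merge n A s \<in> prefix_descent_perms n m J"
    using prefix_merge_permutes[OF assms(1-3)] descents_prefix_merge[OF assms(1-3)]
      descents_prefix_merge_subset[OF assms(1-3)] assms(4)
    by (simp add: prefix_descent_perms_def)
qed

lemma card_prefix_descent_perms:
  "card (prefix_descent_perms n m J) = (n choose m) * dcount J m"
proof -
  let ?P = "{A. A \<subseteq> {1..n} \<and> card A = m} \<times> {s. s permutes {1..m} \<and> descents m s = J}"
  have "bij_betw (prefix_split m) (prefix_descent_perms n m J) ?P"
  proof (rule bij_betw_imageI)
    have "prefix_split m ` prefix_descent_perms n m J \<subseteq> ?P"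
      using prefix_split_mem by (rule image_subsetI)
    moreover have "?P \<subseteq> prefix_split m ` prefix_descent_perms n m J"
    proof
      fix x assume "x \<in> ?P"
      then obtain A s where "x = (A, s)" "A \<subseteq> {1..n}" "card A = m"
        "s permutes {1..m}" "descents m s = J"
        by blast
      then show "x \<in> prefix_split m ` prefix_descent_perms n m J"
        using prefix_split_surj by simp
    qed
    ultimately show "prefix_split m ` prefix_descent_perms n m J = ?P"
      by (rule subset_antisym)
  qed (rule inj_on_prefix_split)
  then have "card (prefix_descent_perms n m J) = card ?P"
    by (rule bij_betw_same_card)
  also have "\<dots> = (n choose m) * dcount J m"
    by (simp add: card_cartesian_product n_subsets dcount_def)
  finally show ?thesis .
qed

end

lemma Int_lessThan_eq_and_subset_atMost_iff:
  fixes D J :: "nat set"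
  assumes "J \<subseteq> {..<m}"
  shows "D \<inter> {..<m} = J \<and> D \<subseteq> {..m} \<longleftrightarrow> D = insert m J \<or> D = J"
proof
  assume D: "D \<inter> {..<m} = J \<and> D \<subseteq> {..m}"
  then have "D = J \<union> (D \<inter> {m})"
    by auto
  then show "D = insert m J \<or> D = J"
    by (cases "m \<in> D") auto
qed (use assms in auto)

lemma dcount_insert_add:
  assumes "J \<subseteq> {..<m}" and "m \<le> n"
  shows "dcount (insert m J) n + dcount J n = (n choose m) * dcount J m"
proof -
  have "descents m p = J \<and> descents n p \<subseteq> {..m}
      \<longleftrightarrow> descents n p = insert m J \<or> descents n p = J" for p
    using Int_lessThan_eq_and_subset_atMost_iff[OF assms(1)]
    by (simp add: descents_Int_lessThan[OF assms(2), symmetric])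
  then have split: "prefix_descent_perms n m J
      = {p. p permutes {1..n} \<and> descents n p = insert m J}
        \<union> {p. p permutes {1..n} \<and> descents n p = J}"
    unfolding prefix_descent_perms_def by auto
  have fin: "finite {p. p permutes {1..n}}"
    by (rule finite_permutations) simp
  have "card (prefix_descent_perms n m J) = dcount (insert m J) n + dcount J n"
    unfolding dcount_def split
    by (rule card_Un_disjoint) (use assms(1) in \<open>auto intro: finite_subset[OF _ fin]\<close>)
  then show ?thesis
    using card_prefix_descent_perms[OF assms(2)] by simp
qed

section \<open>Two constructions of permutations of [m+2]\<close>

lemma permutes_eqI:
  assumes "p permutes S" "q permutes S" "\<And>x. x \<in> S \<Longrightarrow> p x = q x"
  shows "p = q"
proof
  fix x show "p x = q x"
    using assms permutes_not_in[of p S x] permutes_not_in[of q S x] by (cases "x \<in> S") auto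
qed

text \<open>In one-line notation \<open>shift_append k m s\<close> is \<open>(s 1 + k) \<dots> (s m + k) 1 \<dots> k\<close>.\<close>

definition shift_append :: "nat \<Rightarrow> nat \<Rightarrow> (nat \<Rightarrow> nat) \<Rightarrow> nat \<Rightarrow> nat" where
  "shift_append k m s i =
     (if i \<in> {1..m} then s i + k else if i \<in> {Suc m..m + k} then i - m else i)"

lemma shift_append_permutes:
  assumes s: "s permutes {1..m}"
  shows "shift_append k m s permutes {1..m + k}"
proof -
  have "bij_betw (\<lambda>i. i + k) {1..m} {Suc k..m + k}"
    by (rule bij_betw_byWitness[where f' = "\<lambda>i. i - k"]) auto
  then have "bij_betw ((\<lambda>i. i + k) \<circ> s) {1..m} {Suc k..m + k}"
    using permutes_imp_bij[OF s] by (rule bij_betw_trans[rotated])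
  then have "bij_betw (shift_append k m s) {1..m} {Suc k..m + k}"
    by (rule bij_betw_cong[THEN iffD1, rotated]) (simp add: shift_append_def)
  moreover have "bij_betw (shift_append k m s) {Suc m..m + k} {1..k}"
    by (rule bij_betw_byWitness[where f' = "\<lambda>i. i + m"]) (auto simp: shift_append_def)
  ultimately have "bij_betw (shift_append k m s) ({1..m} \<union> {Suc m..m + k}) ({Suc k..m + k} \<union> {1..k})"
    by (rule bij_betw_combine) auto
  moreover have "{1..m} \<union> {Suc m..m + k} = {1..m + k}" "{Suc k..m + k} \<union> {1..k} = {1..m + k}"
    by auto
  ultimately show ?thesis
    by (intro bij_imp_permutes) (auto simp: shift_append_def)
qed

lemma descents_shift_append:
  assumes s: "s permutes {1..m}" and "0 < m" "0 < k"
  shows "descents (m + k) (shift_append k m s) = insert m (descents m s)"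
proof -
  have "1 \<le> s m"
    using permutes_in_image[OF s, of m] assms(2) by simp
  then show ?thesis
    using assms(2,3) by (auto simp: descents_def shift_append_def)
qed

definition insert_one_penultimate :: "nat \<Rightarrow> (nat \<Rightarrow> nat) \<Rightarrow> nat \<Rightarrow> nat" where
  "insert_one_penultimate m t = shift_append 1 (Suc m) t \<circ> transpose (Suc m) (Suc (Suc m))"

lemma insert_one_penultimate_apply:
  "insert_one_penultimate m t i =
     (if i \<in> {1..m} then t i + 1 else if i = Suc m then 1
      else if i = Suc (Suc m) then t (Suc m) + 1 else i)"
  by (simp add: insert_one_penultimate_def shift_append_def transpose_def)

lemma insert_one_penultimate_permutes:
  assumes "t permutes {1..Suc m}"
  shows "insert_one_penultimate m t permutes {1..Suc (Suc m)}"
  unfolding insert_one_penultimate_def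
  using shift_append_permutes[OF assms, of 1]
  by (intro permutes_compose permutes_swap_id) auto

lemma descents_insert_one_penultimate:
  assumes t: "t permutes {1..Suc m}" and "0 < m"
  shows "descents (Suc (Suc m)) (insert_one_penultimate m t) = insert m (descents m t)"
proof -
  have "1 \<le> t m"
    using permutes_in_image[OF t, of m] assms(2) by simp
  then show ?thesis
    using assms(2) by (auto simp: descents_def insert_one_penultimate_apply)
qed

lemma inj_on_shift_append: "inj_on (shift_append k m) {s. s permutes {1..m}}"
proof (rule inj_onI)
  fix s s' assume "s \<in> {s. s permutes {1..m}}" "s' \<in> {s. s permutes {1..m}}"
    and eq: "shift_append k m s = shift_append k m s'"
  have "s i = s' i" if "i \<in> {1..m}" for i
    using that fun_cong[OF eq, of i] by (simp add: shift_append_def)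
  with \<open>s \<in> _\<close> \<open>s' \<in> _\<close> show "s = s'"
    by (intro permutes_eqI[of s "{1..m}" s']) auto
qed

lemma inj_on_insert_one_penultimate:
  "inj_on (insert_one_penultimate m) {t. t permutes {1..Suc m}}"
proof (rule inj_onI)
  fix t t' assume "t \<in> {t. t permutes {1..Suc m}}" "t' \<in> {t. t permutes {1..Suc m}}"
    and eq: "insert_one_penultimate m t = insert_one_penultimate m t'"
  have "t i = t' i" if "i \<in> {1..Suc m}" for i
  proof (cases "i = Suc m")
    case True
    then show ?thesis
      using fun_cong[OF eq, of "Suc (Suc m)"] by (simp add: insert_one_penultimate_apply)
  next
    case False
    then show ?thesis
      using that fun_cong[OF eq, of i] by (simp add: insert_one_penultimate_apply)
  qed
  with \<open>t \<in> _\<close> \<open>t' \<in> _\<close> show "t = t'"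
    by (intro permutes_eqI[of t "{1..Suc m}" t']) auto
qed

lemma shift_append_two_neq_insert_one_penultimate:
  assumes t: "t permutes {1..Suc m}" and "0 < m" and "m \<notin> descents (Suc m) t"
  shows "shift_append 2 m s \<noteq> insert_one_penultimate m t"
proof
  assume "shift_append 2 m s = insert_one_penultimate m t"
  moreover have "shift_append 2 m s (Suc (Suc m)) = 2"
    by (simp add: shift_append_def)
  ultimately have "insert_one_penultimate m t (Suc (Suc m)) = 2"
    by simp
  then have "t (Suc m) = 1"
    by (simp add: insert_one_penultimate_apply)
  moreover have "t m \<in> {1..Suc m}"
    using permutes_in_image[OF t, of m] assms(2) by auto
  moreover have "t m \<noteq> t (Suc m)"
    using injD[OF permutes_inj[OF t], of m "Suc m"] by auto
  ultimately have "m \<in> descents (Suc m) t"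
    using assms(2) by (simp add: descents_def)
  with assms(3) show False ..
qed

lemma dcount_add_dcount_Suc_le:
  assumes J: "J \<subseteq> {..<m}" and m: "0 < m"
  shows "dcount J m + dcount J (Suc m) \<le> dcount (insert m J) (Suc (Suc m))"
proof -
  let ?S = "{s. s permutes {1..m} \<and> descents m s = J}"
  let ?T = "{t. t permutes {1..Suc m} \<and> descents (Suc m) t = J}"
  let ?P = "{p. p permutes {1..Suc (Suc m)} \<and> descents (Suc (Suc m)) p = insert m J}"
  let ?U = "shift_append 2 m ` ?S \<union> insert_one_penultimate m ` ?T"
  have fin: "finite ?S" "finite ?T" "finite ?P"
    by (auto intro: finite_subset[OF _ finite_permutations])
  have "shift_append 2 m ` ?S \<subseteq> ?P"
    using shift_append_permutes[of _ m 2] descents_shift_append[of _ m 2] m by auto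
  moreover have "insert_one_penultimate m ` ?T \<subseteq> ?P"
  proof
    fix p assume "p \<in> insert_one_penultimate m ` ?T"
    then obtain t where t: "t permutes {1..Suc m}" "descents (Suc m) t = J"
      and p: "p = insert_one_penultimate m t"
      by blast
    have "descents m t = J"
      using descents_Int_lessThan[of m "Suc m" t] t(2) J by auto
    with t p show "p \<in> ?P"
      using insert_one_penultimate_permutes descents_insert_one_penultimate m by simp
  qed
  moreover have "shift_append 2 m ` ?S \<inter> insert_one_penultimate m ` ?T = {}"
    using shift_append_two_neq_insert_one_penultimate m J by fastforce
  moreover have "inj_on (shift_append 2 m) ?S" "inj_on (insert_one_penultimate m) ?T"
    by (auto intro: inj_on_subset[OF inj_on_shift_append] inj_on_subset[OF inj_on_insert_one_penultimate])
  ultimately have sum: "card ?S + card ?T = card ?U" and sub: "?U \<subseteq> ?P"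
    using fin by (simp_all add: card_Un_disjoint card_image)
  show ?thesis
    unfolding dcount_def sum by (rule card_mono[OF fin(3) sub])
qed

section \<open>The polynomial and its value at -1\<close>

lemma dcount_empty: "dcount {} n = 1"
proof -
  have "descents n p \<noteq> {0}" for p
    by (auto simp: descents_def)
  then have "dcount {0} n = 0"
    by (simp add: dcount_def)
  moreover have "{p. p permutes {1..0::nat} \<and> descents 0 p = {}} = {id}"
    by (auto simp: descents_def)
  then have "dcount {} 0 = 1"
    by (simp add: dcount_def)
  ultimately show ?thesis
    using dcount_insert_add[of "{}" 0 n] by simp
qed

lemma dcount_poly_insert_step:
  fixes q :: "real poly"
  assumes J: "J \<subseteq> {..<m}" and m: "0 < m"
    and q: "\<And>n. n \<ge> m \<Longrightarrow> poly q (real n) = real (dcount J n)"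
    and bound: "\<bar>poly q (-1)\<bar> \<le> real (dcount J (Suc m))"
  defines "q' \<equiv> smult (real (dcount J m)) (binomial_poly m) - q"
  shows "\<And>n. n \<ge> m \<Longrightarrow> poly q' (real n) = real (dcount (insert m J) n)"
    and "\<bar>poly q' (-1)\<bar> \<le> real (dcount (insert m J) (Suc (Suc m)))"
proof -
  fix n assume n: "n \<ge> m"
  have "real (dcount (insert m J) n) + real (dcount J n) = real (dcount J m) * real (n choose m)"
    using dcount_insert_add[OF J n] by (metis of_nat_add of_nat_mult mult.commute)
  moreover have "poly q' (real n) = real (dcount J m) * real (n choose m) - real (dcount J n)"
    using q[OF n] by (simp add: q'_def poly_binomial_poly_of_nat)
  ultimately show "poly q' (real n) = real (dcount (insert m J) n)"
    by linarith
next
  have "\<bar>poly q' (-1)\<bar> = \<bar>real (dcount J m) * (-1) ^ m - poly q (-1)\<bar>"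
    by (simp add: q'_def poly_binomial_poly_minus_one)
  also have "\<dots> \<le> real (dcount J m) + \<bar>poly q (-1)\<bar>"
    by (rule order.trans[OF abs_triangle_ineq4]) (simp add: abs_mult power_abs)
  also have "\<dots> \<le> real (dcount J m + dcount J (Suc m))"
    using bound by simp
  also have "\<dots> \<le> real (dcount (insert m J) (Suc (Suc m)))"
    using dcount_add_dcount_Suc_le[OF J m] by linarith
  finally show "\<bar>poly q' (-1)\<bar> \<le> real (dcount (insert m J) (Suc (Suc m)))" .
qed

lemma dcount_poly_with_bound:
  assumes "finite I" and "\<forall>i\<in>I. 0 < i"
  shows "\<exists>q. (\<forall>n > Max (I \<union> {0}). poly q (real n) = real (dcount I n))
           \<and> \<bar>poly q (-1)\<bar> \<le> real (dcount I (Max (I \<union> {0}) + 2))"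
  using assms
proof (induction I rule: finite_linorder_max_induct)
  case empty
  show ?case
    by (rule exI[of _ 1]) (simp add: dcount_empty)
next
  case (insert m J)
  have m: "0 < m" and J: "J \<subseteq> {..<m}"
    using insert.hyps(2) insert.prems by auto
  have "Max (J \<union> {0}) < m"
    using insert.hyps J m by (simp add: subset_eq)
  moreover obtain q where q: "\<forall>n > Max (J \<union> {0}). poly q (real n) = real (dcount J n)"
    and bound: "\<bar>poly q (-1)\<bar> \<le> real (dcount J (Max (J \<union> {0}) + 2))"
    using insert.IH insert.prems by auto
  ultimately have "\<And>n. n \<ge> m \<Longrightarrow> poly q (real n) = real (dcount J n)"
    and "\<bar>poly q (-1)\<bar> \<le> real (dcount J (Suc m))"
    using dcount_mono[of "Max (J \<union> {0}) + 2" "Suc m" J] by auto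
  note step = dcount_poly_insert_step[OF J m this]
  have "Max (insert m J \<union> {0}) = m"
    using insert.hyps by (intro Max_eqI) auto
  then show ?case
    using step by (intro exI[of _ "smult (real (dcount J m)) (binomial_poly m) - q"]) auto
qed

theorem proposition3p9:
  fixes I :: "nat set" and n :: nat
  assumes "finite I" and "\<forall>i\<in>I. 0 < i"
    and "n \<ge> Max (I \<union> {0}) + 2"
  shows "real (dcount I n) \<ge> \<bar>poly (dpoly I) (-1)\<bar>"
proof -
  obtain q where q: "\<forall>n > Max (I \<union> {0}). poly q (real n) = real (dcount I n)"
    and bound: "\<bar>poly q (-1)\<bar> \<le> real (dcount I (Max (I \<union> {0}) + 2))"
    using dcount_poly_with_bound[OF assms(1,2)] by blast
  have "dpoly I = q"
    using q by (intro dpoly_eqI) simp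
  moreover have "dcount I (Max (I \<union> {0}) + 2) \<le> dcount I n"
    using assms(3) by (rule dcount_mono)
  ultimately show ?thesis
    using bound by simp
qed

end
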